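(* Let $m \in \mathbb{N}$, $k \geq 4$ and $|q - q_k| < q_k^{-(m+2)k-3}$. Define $\epsilon_q$ by $1 = \pi_q((1^{k-1}0)^\infty) + \epsilon_q$. Then $$-q_k^{-(m+1)k+1} < \epsilon_q < q_k^{-(m+2)k+1}.$$
   Context: $q_k$ is the unique root in $(1,2)$ of $x^k - x^{k-1} - \cdots - x - 1 = 0$. $\pi_q((\epsilon_j)_{j\ge1}) = \sum_{j\ge1}\epsilon_j q^{-j}$, and $(1^{k-1}0)^\infty$ is the periodic sequence repeating the word of $k-1$ ones followed by a zero. *)

theory Defs
  imports "HOL-Analysis.Analysis"
begin

definition q_gen :: "nat \<Rightarrow> real" where
  "q_gen k = (THE x. 1 < x \<and> x < 2 \<and> x ^ k - (\<Sum>i<k. x ^ i) = 0)"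

definition pi_q :: "real \<Rightarrow> (nat \<Rightarrow> real) \<Rightarrow> real" where
  "pi_q q eps = (\<Sum>j. eps (Suc j) * (1 / q ^ Suc j))"

text \<open>The periodic sequence (1^(k-1) 0)^infinity, indexed from 1.\<close>
definition per_seq :: "nat \<Rightarrow> nat \<Rightarrow> real" where
  "per_seq k j = (if j mod k = 0 then 0 else 1)"

end

theory Submission
  imports Defs
begin

text \<open>
  Put \<open>x = 1/q\<close>, \<open>X = 1/q_k\<close> and \<open>G t = t + t^2 + ... + t^k\<close>, so that \<open>q_k\<close> is
  characterised by \<open>G X = 1\<close>. Summing the expansion one period at a time gives
  \<open>pi_q((1^(k-1) 0)^\<infinity>) = (G x - x^k) / (1 - x^k)\<close>, hence \<open>eps_q = (G X - G x) / (1 - x^k)\<close>.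
  On \<open>[0, c]\<close> the polynomial \<open>G\<close> is Lipschitz with constant \<open>1/(1 - c)^2\<close>, which yields
  \<open>|eps_q| \<le> 8 |q - q_k|\<close> as soon as \<open>q, q_k \<ge> 8/5\<close>. For \<open>k \<ge> 4\<close> we have \<open>q_k > 9/5\<close>,
  so \<open>q_k^4 > 8\<close>, and \<open>|q - q_k| < q_k^-(n+4)\<close> gives \<open>|eps_q| < q_k^-n\<close>; take \<open>n = (m+2)k - 1\<close>.
\<close>

lemma sum_power_Suc_mult_power_reciprocal:
  fixes x y :: "'a::comm_semiring_1"
  assumes "x * y = 1"
  shows "(\<Sum>i<n. x ^ Suc i) * y ^ n = (\<Sum>i<n. y ^ i)"
proof (induction n)
  case 0
  then show ?case by simp
next
  case (Suc n)
  have "(\<Sum>i<Suc n. x ^ Suc i) * y ^ Suc n = y * ((\<Sum>i<n. x ^ Suc i) * y ^ n) + (x * y) ^ Suc n"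
    by (simp add: algebra_simps power_mult_distrib)
  also have "\<dots> = y * (\<Sum>i<n. y ^ i) + 1"
    using Suc assms by simp
  also have "\<dots> = (\<Sum>i<Suc n. y ^ i)"
    unfolding sum.lessThan_Suc_shift by (simp add: sum_distrib_left add.commute)
  finally show ?case .
qed

lemma power_eq_sum_lower_powers_iff:
  fixes y :: real
  assumes "0 < y"
  shows "y ^ k - (\<Sum>i<k. y ^ i) = 0 \<longleftrightarrow> (\<Sum>i<k. (1 / y) ^ Suc i) = 1"
proof -
  have "(\<Sum>i<k. (1 / y) ^ Suc i) * y ^ k = (\<Sum>i<k. y ^ i)"
    using assms by (intro sum_power_Suc_mult_power_reciprocal) simp
  moreover have "y ^ k \<noteq> 0"
    using assms by simp
  ultimately show ?thesis
    by (metis eq_iff_diff_eq_0 mult_cancel_right1)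
qed

lemma sum_power_Suc_strict_mono:
  fixes a b :: real
  assumes "0 < a" "a < b" "0 < n"
  shows "(\<Sum>i<n. a ^ Suc i) < (\<Sum>i<n. b ^ Suc i)"
  using assms by (intro sum_strict_mono) (auto intro!: power_strict_mono simp del: power_Suc)

lemma sum_power_Suc_inj:
  fixes a b :: real
  assumes "0 < a" "0 < b" "0 < n" "(\<Sum>i<n. a ^ Suc i) = (\<Sum>i<n. b ^ Suc i)"
  shows "a = b"
  using assms sum_power_Suc_strict_mono[of a b n] sum_power_Suc_strict_mono[of b a n]
  by (metis less_irrefl linorder_neq_iff)

lemma abs_power_diff_le:
  fixes a b c :: real
  assumes "\<bar>a\<bar> \<le> c" "\<bar>b\<bar> \<le> c" "0 < c"
  shows "\<bar>a ^ n - b ^ n\<bar> \<le> n * c ^ (n - 1) * \<bar>a - b\<bar>"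
proof (cases n)
  case 0
  then show ?thesis by simp
next
  case (Suc n')
  have "\<bar>(a / c) ^ n - (b / c) ^ n\<bar> \<le> n * \<bar>a / c - b / c\<bar>"
    using norm_power_diff[of "a / c" "b / c" n] assms by simp
  then have "\<bar>a ^ n - b ^ n\<bar> / c ^ n \<le> n * (\<bar>a - b\<bar> / c)"
    using assms by (simp add: power_divide diff_divide_distrib[symmetric])
  then have "\<bar>a ^ n - b ^ n\<bar> \<le> c ^ n * (n * (\<bar>a - b\<bar> / c))"
    using assms by (simp add: field_simps)
  also have "\<dots> = n * c ^ (n - 1) * \<bar>a - b\<bar>"
    using assms Suc by (simp add: field_simps)
  finally show ?thesis .
qed

lemma sum_Suc_mult_power_le:
  fixes c :: real
  assumes "0 \<le> c" "c < 1"
  shows "(\<Sum>i<n. Suc i * c ^ i) \<le> 1 / (1 - c)\<^sup>2"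
proof -
  have closed_form: "(\<Sum>i<n. Suc i * c ^ i) * (1 - c)\<^sup>2 = 1 - c ^ n * ((n + 1) - n * c)"
    by (induction n) (auto simp: algebra_simps power2_eq_square)
  have "n * c \<le> n + 1"
    using assms mult_left_le[of c n] by simp
  then have "(\<Sum>i<n. Suc i * c ^ i) * (1 - c)\<^sup>2 \<le> 1"
    unfolding closed_form using assms by simp
  then show ?thesis
    using assms by (simp add: field_simps)
qed

lemma abs_sum_power_Suc_diff_le:
  fixes a b c :: real
  assumes "\<bar>a\<bar> \<le> c" "\<bar>b\<bar> \<le> c" "c < 1"
  shows "\<bar>(\<Sum>i<n. a ^ Suc i) - (\<Sum>i<n. b ^ Suc i)\<bar> \<le> \<bar>a - b\<bar> / (1 - c)\<^sup>2"
proof (cases "c = 0")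
  case True
  then show ?thesis using assms by simp
next
  case False
  then have "0 < c" using assms by linarith
  have "\<bar>(\<Sum>i<n. a ^ Suc i) - (\<Sum>i<n. b ^ Suc i)\<bar> \<le> (\<Sum>i<n. \<bar>a ^ Suc i - b ^ Suc i\<bar>)"
    unfolding sum_subtractf[symmetric] by (rule sum_abs)
  also have "\<dots> \<le> (\<Sum>i<n. Suc i * c ^ i * \<bar>a - b\<bar>)"
  proof (rule sum_mono)
    fix i
    show "\<bar>a ^ Suc i - b ^ Suc i\<bar> \<le> Suc i * c ^ i * \<bar>a - b\<bar>"
      using abs_power_diff_le[OF assms(1,2) \<open>0 < c\<close>, of "Suc i"] by simp
  qed
  also have "\<dots> = (\<Sum>i<n. Suc i * c ^ i) * \<bar>a - b\<bar>"
    by (simp add: sum_distrib_right)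
  also have "\<dots> \<le> 1 / (1 - c)\<^sup>2 * \<bar>a - b\<bar>"
    using \<open>0 < c\<close> assms by (intro mult_right_mono sum_Suc_mult_power_le) auto
  finally show ?thesis
    by simp
qed

lemma sum_per_seq_period:
  fixes x :: real
  assumes "1 \<le> k"
  shows "(\<Sum>j\<in>{n * k..<n * k + k}. per_seq k (Suc j) * x ^ Suc j) = (x ^ k) ^ n * (\<Sum>i<k - 1. x ^ Suc i)"
proof -
  let ?f = "\<lambda>j. per_seq k (Suc j) * x ^ Suc j"
  have "(\<Sum>j\<in>{n * k..<n * k + k}. ?f j) = (\<Sum>i<Suc (k - 1). ?f (i + n * k))"
    using sum.shift_bounds_nat_ivl[of ?f 0 "n * k" k] assms by (simp add: atLeast0LessThan add.commute)
  also have "\<dots> = (\<Sum>i<k - 1. ?f (i + n * k))"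
  proof -
    have "Suc (k - 1 + n * k) = k + n * k"
      using assms by simp
    then show ?thesis
      by (simp only: sum.lessThan_Suc) (simp add: per_seq_def)
  qed
  also have "\<dots> = (\<Sum>i<k - 1. (x ^ k) ^ n * x ^ Suc i)"
  proof (rule sum.cong)
    fix i
    assume "i \<in> {..<k - 1}"
    then have "Suc (i + n * k) mod k = Suc i" "Suc i mod k \<noteq> 0"
      by (simp_all only: add_Suc[symmetric] mod_mult_self1) auto
    then show "?f (i + n * k) = (x ^ k) ^ n * x ^ Suc i"
      by (simp add: per_seq_def power_add power_mult mult.commute)
  qed simp
  finally show ?thesis
    by (simp add: sum_distrib_left)
qed

lemma pi_q_per_seq:
  assumes "1 \<le> k" "1 < q"
  shows "pi_q q (per_seq k) = (\<Sum>i<k - 1. (1 / q) ^ Suc i) / (1 - (1 / q) ^ k)"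
proof -
  define x where "x = 1 / q"
  have x: "0 < x" "x < 1"
    using assms by (auto simp: x_def)
  let ?f = "\<lambda>j. per_seq k (Suc j) * x ^ Suc j"
  let ?B = "\<Sum>i<k - 1. x ^ Suc i"
  have "summable (\<lambda>j. x ^ Suc j)"
    using x by (simp add: summable_geometric summable_mult)
  then have "summable ?f"
    by (rule summable_comparison_test'[of _ 0]) (use x in \<open>auto simp: per_seq_def\<close>)
  moreover have "pi_q q (per_seq k) = suminf ?f"
    unfolding pi_q_def x_def by (simp add: power_one_over)
  ultimately have "?f sums pi_q q (per_seq k)"
    by (simp add: summable_sums)
  then have "(\<lambda>n. (x ^ k) ^ n * ?B) sums pi_q q (per_seq k)"
    using sums_group[of ?f _ k] sum_per_seq_period[OF assms(1)] assms(1) by simp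
  moreover have "(\<lambda>n. (x ^ k) ^ n * ?B) sums (1 / (1 - x ^ k) * ?B)"
    using x assms by (intro sums_mult2 geometric_sums) (simp add: power_less_one_iff abs_of_pos)
  ultimately have "pi_q q (per_seq k) = 1 / (1 - x ^ k) * ?B"
    by (rule sums_unique2)
  then show ?thesis
    by (simp add: x_def)
qed

lemma q_gen_root:
  assumes "2 \<le> k"
  shows "1 < q_gen k" "q_gen k < 2" "(\<Sum>i<k. (1 / q_gen k) ^ Suc i) = 1"
proof -
  let ?p = "\<lambda>x::real. x ^ k - (\<Sum>i<k. x ^ i)"
  have "?p 1 < 0"
    using assms by simp
  moreover have "?p 2 = 1"
    by (induction k) auto
  moreover have "continuous_on {1..2} ?p"
    by (intro continuous_intros)
  ultimately obtain y where "1 \<le> y" "y \<le> 2" "?p y = 0"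
    using IVT'[of ?p 1 0 2] by auto
  with \<open>?p 1 < 0\<close> \<open>?p 2 = 1\<close> have y: "1 < y" "y < 2" "?p y = 0"
    by (auto simp: order_le_less)
  have "q_gen k = y"
    unfolding q_gen_def
  proof (rule the_equality)
    fix z :: real
    assume z: "1 < z \<and> z < 2 \<and> ?p z = 0"
    have "(\<Sum>i<k. (1 / z) ^ Suc i) = (\<Sum>i<k. (1 / y) ^ Suc i)"
      using z y power_eq_sum_lower_powers_iff[of z k] power_eq_sum_lower_powers_iff[of y k] by simp
    then show "z = y"
      using z y assms sum_power_Suc_inj[of "1 / z" "1 / y" k] by simp
  qed (use y in simp)
  then show "1 < q_gen k" "q_gen k < 2" "(\<Sum>i<k. (1 / q_gen k) ^ Suc i) = 1"
    using y power_eq_sum_lower_powers_iff[of y k] by simp_all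
qed

lemma q_gen_gt_nine_fifths:
  assumes "4 \<le> k"
  shows "9/5 < q_gen k"
proof (rule ccontr)
  assume "\<not> 9/5 < q_gen k"
  then have "5/9 \<le> 1 / q_gen k"
    using q_gen_root(1)[of k] assms by (simp add: field_simps)
  then have "(\<Sum>i<4. (5/9::real) ^ Suc i) \<le> (\<Sum>i<4. (1 / q_gen k) ^ Suc i)"
    by (intro sum_mono power_mono) auto
  also have "\<dots> \<le> (\<Sum>i<k. (1 / q_gen k) ^ Suc i)"
    using assms q_gen_root(1)[of k] by (intro sum_mono2) auto
  also have "\<dots> = 1"
    using assms q_gen_root(3) by simp
  finally show False
    by (simp add: numeral_eq_Suc)
qed

lemma abs_one_minus_pi_q_per_seq_le:
  assumes "1 \<le> k" "8/5 \<le> q" "8/5 \<le> Q" "(\<Sum>i<k. (1 / Q) ^ Suc i) = 1"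
  shows "\<bar>1 - pi_q q (per_seq k)\<bar> \<le> 8 * \<bar>q - Q\<bar>"
proof -
  define x X where "x = 1 / q" and "X = 1 / Q"
  have x: "0 < x" "x \<le> 5/8" and X: "0 < X" "X \<le> 5/8"
    using assms by (auto simp: x_def X_def field_simps)
  have "3/8 \<le> 1 - x ^ k"
    using x power_decreasing[of 1 k x] assms(1) by simp
  have "(\<Sum>i<k. x ^ Suc i) = (\<Sum>i<k - 1. x ^ Suc i) + x ^ k"
    using sum.lessThan_Suc[of "\<lambda>i. x ^ Suc i" "k - 1"] assms(1) by simp
  then have "1 - pi_q q (per_seq k) = ((\<Sum>i<k. X ^ Suc i) - (\<Sum>i<k. x ^ Suc i)) / (1 - x ^ k)"
    using pi_q_per_seq[of k q] assms \<open>3/8 \<le> 1 - x ^ k\<close> by (simp add: x_def X_def field_simps)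
  then have "\<bar>1 - pi_q q (per_seq k)\<bar> = \<bar>(\<Sum>i<k. X ^ Suc i) - (\<Sum>i<k. x ^ Suc i)\<bar> / (1 - x ^ k)"
    using \<open>3/8 \<le> 1 - x ^ k\<close> by (simp add: abs_div)
  also have "\<dots> \<le> (64/9 * (25/64 * \<bar>q - Q\<bar>)) / (3/8)"
  proof (rule frac_le)
    have "\<bar>(\<Sum>i<k. X ^ Suc i) - (\<Sum>i<k. x ^ Suc i)\<bar> \<le> \<bar>X - x\<bar> / (1 - 5/8)\<^sup>2"
      using abs_sum_power_Suc_diff_le[of X "5/8" x k] x X by simp
    also have "\<bar>X - x\<bar> \<le> 25/64 * \<bar>q - Q\<bar>"
    proof -
      have "\<bar>X - x\<bar> * (q * Q) = \<bar>q - Q\<bar>"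
        using assms by (simp add: X_def x_def field_simps abs_div)
      moreover have "\<bar>X - x\<bar> * (8/5 * (8/5)) \<le> \<bar>X - x\<bar> * (q * Q)"
        using assms by (intro mult_left_mono mult_mono) auto
      ultimately show ?thesis
        by simp
    qed
    finally show "\<bar>(\<Sum>i<k. X ^ Suc i) - (\<Sum>i<k. x ^ Suc i)\<bar> \<le> 64/9 * (25/64 * \<bar>q - Q\<bar>)"
      by (simp add: divide_right_mono power2_eq_square)
  qed (use \<open>3/8 \<le> 1 - x ^ k\<close> in auto)
  also have "\<dots> \<le> 8 * \<bar>q - Q\<bar>"
    by simp
  finally show ?thesis .
qed

lemma abs_one_minus_pi_q_per_seq_lt:
  assumes "4 \<le> k" "\<bar>q - q_gen k\<bar> < 1 / q_gen k ^ (n + 4)"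
  shows "\<bar>1 - pi_q q (per_seq k)\<bar> < 1 / q_gen k ^ n"
proof -
  define Q where "Q = q_gen k"
  have "9/5 < Q" "(\<Sum>i<k. (1 / Q) ^ Suc i) = 1"
    using q_gen_gt_nine_fifths q_gen_root assms(1) by (simp_all add: Q_def)
  have "10 < Q ^ 4"
    using power_strict_mono[OF \<open>9/5 < Q\<close>, of 4] by (simp add: power_divide)
  have "1 \<le> Q ^ n"
    using \<open>9/5 < Q\<close> by simp
  have "\<bar>q - Q\<bar> < 1 / (Q ^ 4 * Q ^ n)"
    using assms(2) by (simp add: Q_def power_add mult.commute)
  moreover have "1 / (Q ^ 4 * Q ^ n) \<le> 1 / 10"
    using mult_mono[of 10 "Q ^ 4" 1 "Q ^ n"] \<open>10 < Q ^ 4\<close> \<open>1 \<le> Q ^ n\<close> by (intro divide_left_mono) auto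
  ultimately have "8/5 \<le> q"
    using \<open>9/5 < Q\<close> by linarith
  have "\<bar>1 - pi_q q (per_seq k)\<bar> \<le> 8 * \<bar>q - Q\<bar>"
    using \<open>(\<Sum>i<k. (1 / Q) ^ Suc i) = 1\<close> \<open>8/5 \<le> q\<close> \<open>9/5 < Q\<close> assms(1)
    by (intro abs_one_minus_pi_q_per_seq_le) auto
  also have "\<dots> < 8 / (Q ^ 4 * Q ^ n)"
    using \<open>\<bar>q - Q\<bar> < 1 / (Q ^ 4 * Q ^ n)\<close> by simp
  also have "\<dots> < 1 / Q ^ n"
    using \<open>10 < Q ^ 4\<close> \<open>9/5 < Q\<close> by (simp add: divide_strict_right_mono flip: divide_divide_eq_left)
  finally show ?thesis
    by (simp add: Q_def)
qed

theorem lemma3p5: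
  fixes m k :: nat and q eps_q :: real
  assumes "k \<ge> 4"
    and "\<bar>q - q_gen k\<bar> < 1 / q_gen k ^ ((m + 2) * k + 3)"
    and "1 = pi_q q (per_seq k) + eps_q"
  shows "- (1 / q_gen k ^ ((m + 1) * k - 1)) < eps_q \<and> eps_q < 1 / q_gen k ^ ((m + 2) * k - 1)"
proof -
  have "(m + 2) * k + 3 = ((m + 2) * k - 1) + 4"
    using assms(1) by simp
  then have "\<bar>1 - pi_q q (per_seq k)\<bar> < 1 / q_gen k ^ ((m + 2) * k - 1)"
    using assms(1,2) by (intro abs_one_minus_pi_q_per_seq_lt) (simp_all only:)
  moreover have "eps_q = 1 - pi_q q (per_seq k)"
    using assms(3) by simp
  moreover have "1 / q_gen k ^ ((m + 2) * k - 1) \<le> 1 / q_gen k ^ ((m + 1) * k - 1)"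
    using q_gen_root(1)[of k] assms(1) by (intro divide_left_mono power_increasing diff_le_mono) auto
  ultimately show ?thesis
    by (simp add: abs_less_iff)
qed

end
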